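(* Let $\alpha_1>0$ and $\alpha_1+\alpha_2+1>0$, and suppose the loss scales as $\ell(N,D)\sim N^{-\alpha_N}+D^{-\alpha_D}$ with $\alpha_N=\alpha_1+\alpha_2+1$ and $\alpha_D=\frac{\alpha_1+\alpha_2+1}{\alpha_1+1}$. Under a fixed compute budget $C=ND\cdot\min\{N,D\}$, the unique compute-optimal allocation (minimizing $\ell$ subject to the budget) lies in the underparameterized regime $N<D$, and the optimal allocation and resulting loss scale as $$N^*(C)\sim C^{\alpha_D/(\alpha_N+2\alpha_D)}=C^{1/(\alpha_1+3)},\qquad D^*(C)\sim C^{1-2\alpha_D/(\alpha_N+2\alpha_D)}=C^{(\alpha_1+1)/(\alpha_1+3)},$$ $$\ell^*(C)\sim C^{-\alpha_C},\qquad \alpha_C:=\frac{\alpha_N\alpha_D}{\alpha_N+2\alpha_D}=\frac{\alpha_1+\alpha_2+1}{\alpha_1+3}>0.$$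
   Context: $N$ is the number of model parameters and $D$ the number of training samples; "$\sim$" denotes asymptotic scaling up to constants as $C\to\infty$. *)

theory Defs
  imports Complex_Main "HOL-Library.Landau_Symbols"
begin

definition loss :: "real \<Rightarrow> real \<Rightarrow> real \<Rightarrow> real \<Rightarrow> real" where
  "loss aN aD N D = N powr (- aN) + D powr (- aD)"

definition compute :: "real \<Rightarrow> real \<Rightarrow> real" where
  "compute N D = N * D * min N D"

definition is_opt_alloc :: "real \<Rightarrow> real \<Rightarrow> real \<Rightarrow> real \<Rightarrow> real \<Rightarrow> bool" where
  "is_opt_alloc aN aD C N D \<longleftrightarrow> N > 0 \<and> D > 0 \<and> compute N D = C \<and>
     (\<forall>N' D'. N' > 0 \<longrightarrow> D' > 0 \<longrightarrow> compute N' D' = C \<longrightarrow> loss aN aD N D \<le> loss aN aD N' D')"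

end

theory Submission
  imports Defs
begin

text \<open>With \<open>a = \<alpha>N > b = \<alpha>D > 0\<close>: on the underparameterized branch \<open>N \<le> D\<close> the budget forces
  \<open>D = C / N^2\<close>, and \<open>N^(-a) + C^(-b) N^(2b)\<close> is strictly minimized at its stationary point
  \<open>n \<sim> C^(b/(a+2b))\<close>, where the loss is \<open>\<sim> C^(-ab/(a+2b))\<close>. On the overparameterized branch
  \<open>D \<le> N\<close> we have \<open>D^3 \<le> C\<close>, so the loss is at least \<open>C^(-b/3)\<close>, which is eventually larger
  because \<open>ab/(a+2b) > b/3\<close>. Likewise \<open>n^3 \<sim> C^(3b/(a+2b)) < C\<close> eventually, so the minimizer
  satisfies \<open>n < D\<close>.\<close>

lemma powr_sum_strict_min_at_one:
  fixes a c P Q t :: real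
  assumes "a \<noteq> 0" "P > 0" "Q \<ge> 0" "a * P = c * Q" "t > 0" "t \<noteq> 1"
  shows "P + Q < P * t powr (-a) + Q * t powr c"
\<comment> \<open>Bound both powers by their tangent lines in \<open>ln t\<close>; the linear terms cancel since \<open>a P = c Q\<close>.\<close>
proof -
  define s where "s = ln t"
  have "s \<noteq> 0" using assms(5,6) by (simp add: s_def)
  then have "1 - a * s < t powr (-a)"
    using assms(1,5) exp_minus_greater[of "a * s"] by (simp add: powr_def s_def)
  moreover have "1 + c * s \<le> t powr c"
    using assms(5) exp_ge_add_one_self[of "c * s"] by (simp add: powr_def s_def)
  ultimately have "P * (1 - a * s) + Q * (1 + c * s) < P * t powr (-a) + Q * t powr c"
    using assms(2,3) by (intro add_less_le_mono mult_strict_left_mono mult_left_mono) auto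
  moreover have "P * (1 - a * s) + Q * (1 + c * s) = P + Q"
    using assms(4) by (simp add: algebra_simps)
  ultimately show ?thesis by simp
qed

lemma eventually_mult_powr_less_powr:
  fixes p q c :: real
  assumes "p < q"
  shows "\<forall>\<^sub>F x in at_top. c * x powr p < x powr q"
proof -
  have "(\<lambda>x::real. x powr p) \<in> o[at_top](\<lambda>x. x powr q)"
    using assms by (simp add: powr_smallo_iff filterlim_ident)
  then have "(\<lambda>x. c * x powr p) \<in> o[at_top](\<lambda>x. x powr q)" by simp
  from landau_o.smallD[OF this, of "1/2"]
  have "\<forall>\<^sub>F x in at_top. \<bar>c * x powr p\<bar> \<le> x powr q / 2" by simp
  with eventually_gt_at_top[of 0] show ?thesis
  proof eventually_elim
    case (elim x)
    then have "x powr q > 0" by simp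
    with elim show ?case using abs_ge_self[of "c * x powr p"] by linarith
  qed
qed

lemma bigtheta_powr_if_eq_const_mult:
  fixes f :: "real \<Rightarrow> real"
  assumes "c \<noteq> 0" "\<And>x. x > 0 \<Longrightarrow> f x = c * x powr p"
  shows "f \<in> \<Theta>[at_top](\<lambda>x. x powr p)"
proof -
  have "f \<in> \<Theta>[at_top](\<lambda>x. c * x powr p)"
    using assms(2) by (intro bigthetaI_cong eventually_mono[OF eventually_gt_at_top[of 0]])
  with assms(1) show ?thesis by simp
qed

lemma loss_div_square:
  assumes "N > 0" "C > 0"
  shows "loss a b N (C / N^2) = N powr (-a) + C powr (-b) * N powr (2*b)"
proof -
  have "(N^2) powr (-b) = (N powr 2) powr (-b)"
    using assms(1) by simp
  also have "\<dots> = N powr (-(2*b))"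
    unfolding powr_powr by simp
  finally have "(N^2) powr (-b) = N powr (-(2*b))" .
  moreover have "(C / N^2) powr (-b) = C powr (-b) / (N^2) powr (-b)"
    by (rule powr_divide)
  ultimately show ?thesis
    by (simp add: loss_def powr_minus divide_inverse)
qed

lemma data_eq_if_underparam:
  assumes "N > 0" "N \<le> D" "compute N D = C"
  shows "D = C / N^2"
  using assms by (auto simp: compute_def min_def power2_eq_square field_simps)

lemma loss_gt_if_overparam:
  assumes "b > 0" "D > 0" "D \<le> N" "compute N D = C"
  shows "C powr (-b/3) < loss a b N D"
proof -
  have "C = N * D * D"
    using assms(3,4) by (simp add: compute_def min_absorb2)
  then have "D^3 \<le> C"
    using assms(2,3) by (simp add: power3_eq_cube mult_right_mono)
  then have "C powr (-b/3) \<le> (D^3) powr (-b/3)"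
    using assms(1,2) by (intro powr_mono2') auto
  also have "\<dots> = (D powr 3) powr (-b/3)"
    using assms(2) by simp
  also have "\<dots> = D powr (-b)"
    unfolding powr_powr by simp
  also have "\<dots> < N powr (-a) + D powr (-b)"
    using assms(2,3) by simp
  finally show ?thesis
    by (simp add: loss_def)
qed

lemma strict_min_imp_unique_opt_alloc:
  assumes "n > 0" "d > 0" "compute n d = C"
    and "\<And>N D. N > 0 \<Longrightarrow> D > 0 \<Longrightarrow> compute N D = C \<Longrightarrow> (N, D) \<noteq> (n, d) \<Longrightarrow>
           loss a b n d < loss a b N D"
  shows "is_opt_alloc a b C n d \<and> (\<forall>N D. is_opt_alloc a b C N D \<longrightarrow> N = n \<and> D = d)"
  using assms unfolding is_opt_alloc_def by (metis less_le not_le prod.inject)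

text \<open>The stationary point of \<open>N \<mapsto> loss a b N (C / N^2)\<close>, i.e. the root of
  \<open>a N^(-a) = 2 b C^(-b) N^(2b)\<close>, and the data size that exhausts the budget there.\<close>
definition opt_param :: "real \<Rightarrow> real \<Rightarrow> real \<Rightarrow> real" where
  "opt_param a b C = (a / (2*b) * C powr b) powr (1 / (a + 2*b))"

definition opt_data :: "real \<Rightarrow> real \<Rightarrow> real \<Rightarrow> real" where
  "opt_data a b C = C / opt_param a b C ^ 2"

lemma opt_param_powr:
  "opt_param a b C powr x = (a / (2*b)) powr (x / (a + 2*b)) * C powr (b * x / (a + 2*b))"
proof -
  have "opt_param a b C powr x = (a / (2*b) * C powr b) powr (x / (a + 2*b))"
    by (simp add: opt_param_def powr_powr)
  also have "\<dots> = (a / (2*b)) powr (x / (a + 2*b)) * (C powr b) powr (x / (a + 2*b))"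
    by (rule powr_mult)
  finally show ?thesis by (simp add: powr_powr)
qed

context
  fixes a b :: real
  assumes a: "a > 0" and b: "b > 0"
begin

lemma opt_param_pos: "C > 0 \<Longrightarrow> opt_param a b C > 0"
  using a b by (simp add: opt_param_def)

lemma opt_param_balance:
  assumes "C > 0"
  shows "C powr (-b) * opt_param a b C powr (2*b) = a / (2*b) * opt_param a b C powr (-a)"
proof -
  define n where "n = opt_param a b C"
  have "n powr (a + 2*b) = a / (2*b) * C powr b"
    using a b assms by (simp add: n_def opt_param_def powr_powr)
  moreover have "n powr (2*b) = n powr (a + 2*b) * n powr (-a)"
    by (simp flip: powr_add)
  ultimately have "C powr (-b) * n powr (2*b) = (C powr (-b) * C powr b) * (a / (2*b) * n powr (-a))"
    by (simp only: mult_ac)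
  also have "C powr (-b) * C powr b = 1"
    using assms by (simp flip: powr_add)
  finally show ?thesis by (simp add: n_def)
qed

lemma loss_opt_alloc:
  assumes "C > 0"
  shows "loss a b (opt_param a b C) (opt_data a b C) = (1 + a / (2*b)) * opt_param a b C powr (-a)"
proof -
  have "loss a b (opt_param a b C) (opt_data a b C)
        = opt_param a b C powr (-a) + C powr (-b) * opt_param a b C powr (2*b)"
    unfolding opt_data_def by (rule loss_div_square[OF opt_param_pos[OF assms] assms])
  also have "\<dots> = (1 + a / (2*b)) * opt_param a b C powr (-a)"
    unfolding opt_param_balance[OF assms] by (simp add: algebra_simps)
  finally show ?thesis .
qed

lemma loss_div_square_gt_opt:
  assumes "C > 0" "N > 0" "N \<noteq> opt_param a b C"
  shows "loss a b (opt_param a b C) (opt_data a b C) < loss a b N (C / N^2)"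
proof -
  define n where "n = opt_param a b C"
  define t where "t = N / n"
  have n: "n > 0" using opt_param_pos[OF assms(1)] by (simp add: n_def)
  have N: "N = n * t" and t: "t > 0" "t \<noteq> 1"
    using n assms(2,3) by (auto simp: t_def n_def)
  have "n powr (-a) + C powr (-b) * n powr (2*b)
        < n powr (-a) * t powr (-a) + (C powr (-b) * n powr (2*b)) * t powr (2*b)"
    using a b t n opt_param_balance[OF assms(1)]
    by (intro powr_sum_strict_min_at_one) (auto simp: n_def)
  also have "\<dots> = loss a b N (C / N^2)"
    using assms(1,2) n t by (simp add: loss_div_square N powr_mult)
  finally show ?thesis
    using assms(1) n by (simp add: loss_div_square opt_data_def flip: n_def)
qed

lemma unique_opt_alloc_if_underparam:
  assumes "C > 0" "opt_param a b C ^ 3 < C"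
    and "loss a b (opt_param a b C) (opt_data a b C) < C powr (-b/3)"
  shows "is_opt_alloc a b C (opt_param a b C) (opt_data a b C)
    \<and> (\<forall>N D. is_opt_alloc a b C N D \<longrightarrow> N = opt_param a b C \<and> D = opt_data a b C)
    \<and> opt_param a b C < opt_data a b C"
proof -
  define n where "n = opt_param a b C"
  define d where "d = opt_data a b C"
  have n: "n > 0" using opt_param_pos[OF assms(1)] by (simp add: n_def)
  have "n * n^2 < C" using assms(2) by (simp add: n_def power3_eq_cube power2_eq_square)
  then have "n < d" using n by (simp add: d_def opt_data_def field_simps flip: n_def)
  moreover have "compute n d = C"
    using n \<open>n < d\<close> by (simp add: compute_def d_def opt_data_def power2_eq_square flip: n_def)
  moreover have "loss a b n d < loss a b N D"
    if "N > 0" "D > 0" "compute N D = C" "(N, D) \<noteq> (n, d)" for N D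
  proof (cases "N < D")
    case True
    then have "D = C / N^2" using that(1,3) by (intro data_eq_if_underparam) auto
    with that(4) have "N \<noteq> n" by (auto simp: d_def opt_data_def n_def)
    with that(1) \<open>D = C / N^2\<close> show ?thesis
      using loss_div_square_gt_opt[OF assms(1)] by (simp add: n_def d_def)
  next
    case False
    then show ?thesis
      using assms(3) loss_gt_if_overparam[OF b that(2) _ that(3), of a] by (simp add: n_def d_def)
  qed
  ultimately show ?thesis
    using n strict_min_imp_unique_opt_alloc[of n d C a b] by (simp add: n_def d_def)
qed

lemma eventually_unique_opt_alloc:
  assumes "b < a"
  shows "\<forall>\<^sub>F C in at_top. is_opt_alloc a b C (opt_param a b C) (opt_data a b C)
    \<and> (\<forall>N D. is_opt_alloc a b C N D \<longrightarrow> N = opt_param a b C \<and> D = opt_data a b C)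
    \<and> opt_param a b C < opt_data a b C"
proof -
  \<comment> \<open>Both exponent gaps, \<open>3b < a + 2b\<close> and \<open>b/3 < ab/(a+2b)\<close>, amount to \<open>b < a\<close>.\<close>
  have "\<forall>\<^sub>F C in at_top. (a / (2*b)) powr (3 / (a + 2*b)) * C powr (b * 3 / (a + 2*b)) < C powr 1"
    using assms a b by (intro eventually_mult_powr_less_powr) (simp add: field_simps)
  moreover have "\<forall>\<^sub>F C in at_top. (1 + a / (2*b)) * (a / (2*b)) powr (-a / (a + 2*b))
      * C powr (b * (-a) / (a + 2*b)) < C powr (-b/3)"
    using assms a b by (intro eventually_mult_powr_less_powr) (simp add: field_simps)
  ultimately show ?thesis
    using eventually_gt_at_top[of 0]
  proof eventually_elim
    case (elim C)
    have "opt_param a b C ^ 3 < C"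
      using elim opt_param_pos[of C] by (simp add: opt_param_powr[of a b C 3, symmetric])
    moreover have "loss a b (opt_param a b C) (opt_data a b C) < C powr (-b/3)"
      using elim by (simp add: loss_opt_alloc opt_param_powr mult.assoc)
    ultimately show ?case
      using elim by (intro unique_opt_alloc_if_underparam)
  qed
qed

lemma opt_param_bigtheta: "opt_param a b \<in> \<Theta>[at_top](\<lambda>C. C powr (b / (a + 2*b)))"
proof (rule bigtheta_powr_if_eq_const_mult)
  show "opt_param a b C = (a / (2*b)) powr (1 / (a + 2*b)) * C powr (b / (a + 2*b))" if "C > 0" for C
    using opt_param_powr[of a b C 1] opt_param_pos[OF that] by simp
qed (use a b in simp)

lemma opt_data_bigtheta: "opt_data a b \<in> \<Theta>[at_top](\<lambda>C. C powr (1 - 2 * b / (a + 2*b)))"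
proof (rule bigtheta_powr_if_eq_const_mult)
  show "opt_data a b C = (a / (2*b)) powr (-2 / (a + 2*b)) * C powr (1 - 2 * b / (a + 2*b))"
    if "C > 0" for C
  proof -
    have "opt_data a b C = C powr 1 * opt_param a b C powr (-2)"
      using that opt_param_pos[OF that] by (simp add: opt_data_def powr_minus divide_inverse)
    also have "\<dots> = (a / (2*b)) powr (-2 / (a + 2*b)) * (C powr 1 * C powr (b * (-2) / (a + 2*b)))"
      unfolding opt_param_powr by (simp only: mult_ac)
    also have "C powr 1 * C powr (b * (-2) / (a + 2*b)) = C powr (1 - 2 * b / (a + 2*b))"
      unfolding powr_add[symmetric] by (simp add: mult.commute)
    finally show ?thesis .
  qed
qed (use a b in simp)

lemma loss_opt_alloc_bigtheta:
  "(\<lambda>C. loss a b (opt_param a b C) (opt_data a b C)) \<in> \<Theta>[at_top](\<lambda>C. C powr (- (a * b / (a + 2*b))))"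
proof (rule bigtheta_powr_if_eq_const_mult)
  show "loss a b (opt_param a b C) (opt_data a b C)
        = ((1 + a / (2*b)) * (a / (2*b)) powr (-a / (a + 2*b))) * C powr (- (a * b / (a + 2*b)))"
    if "C > 0" for C
  proof -
    have "b * (-a) / (a + 2*b) = - (a * b / (a + 2*b))" by simp
    then show ?thesis
      unfolding loss_opt_alloc[OF that] opt_param_powr by (simp only: mult.assoc)
  qed
qed (use a b in \<open>simp, smt (verit) divide_pos_pos\<close>)

end

theorem proposition2:
  fixes \<alpha>1 \<alpha>2 :: real
  assumes "\<alpha>1 > 0" and "\<alpha>1 + \<alpha>2 + 1 > 0"
  defines "\<alpha>N \<equiv> \<alpha>1 + \<alpha>2 + 1"
    and "\<alpha>D \<equiv> (\<alpha>1 + \<alpha>2 + 1) / (\<alpha>1 + 1)"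
    and "\<alpha>C \<equiv> (\<alpha>1 + \<alpha>2 + 1) * ((\<alpha>1 + \<alpha>2 + 1) / (\<alpha>1 + 1)) / ((\<alpha>1 + \<alpha>2 + 1) + 2 * ((\<alpha>1 + \<alpha>2 + 1) / (\<alpha>1 + 1)))"
  shows "\<exists>Nopt Dopt :: real \<Rightarrow> real.
     (\<forall>\<^sub>F C in at_top.
        is_opt_alloc \<alpha>N \<alpha>D C (Nopt C) (Dopt C) \<and>
        (\<forall>N D. is_opt_alloc \<alpha>N \<alpha>D C N D \<longrightarrow> N = Nopt C \<and> D = Dopt C) \<and>
        Nopt C < Dopt C)
   \<and> Nopt \<in> \<Theta>[at_top](\<lambda>C. C powr (\<alpha>D / (\<alpha>N + 2 * \<alpha>D)))
   \<and> Dopt \<in> \<Theta>[at_top](\<lambda>C. C powr (1 - 2 * \<alpha>D / (\<alpha>N + 2 * \<alpha>D)))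
   \<and> (\<lambda>C. loss \<alpha>N \<alpha>D (Nopt C) (Dopt C)) \<in> \<Theta>[at_top](\<lambda>C. C powr (- \<alpha>C))
   \<and> \<alpha>D / (\<alpha>N + 2 * \<alpha>D) = 1 / (\<alpha>1 + 3)
   \<and> 1 - 2 * \<alpha>D / (\<alpha>N + 2 * \<alpha>D) = (\<alpha>1 + 1) / (\<alpha>1 + 3)
   \<and> \<alpha>C = (\<alpha>1 + \<alpha>2 + 1) / (\<alpha>1 + 3)
   \<and> \<alpha>C > 0"
proof -
  have \<alpha>1: "\<alpha>1 + 1 > 0" "\<alpha>1 + 3 > 0"
    using assms(1) by simp_all
  have pos: "\<alpha>N > 0" "\<alpha>D > 0"
    using assms(2) \<alpha>1 by (simp_all add: \<alpha>N_def \<alpha>D_def)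
  have \<alpha>D: "\<alpha>D = \<alpha>N / (\<alpha>1 + 1)"
    unfolding \<alpha>D_def \<alpha>N_def ..
  then have "\<alpha>D < \<alpha>N"
    using mult_strict_left_mono[of 1 "\<alpha>1 + 1" \<alpha>N] pos(1) \<alpha>1 assms(1) by (simp add: divide_less_eq)
  have \<alpha>C: "\<alpha>C = \<alpha>N * \<alpha>D / (\<alpha>N + 2 * \<alpha>D)"
    unfolding \<alpha>C_def \<alpha>N_def \<alpha>D_def ..
  have "\<alpha>N + 2 * \<alpha>D = \<alpha>D * (\<alpha>1 + 3)"
    using \<alpha>D \<alpha>1 by (simp add: field_simps)
  then have exponent_N: "\<alpha>D / (\<alpha>N + 2 * \<alpha>D) = 1 / (\<alpha>1 + 3)"
    using pos by simp
  moreover have "1 - 2 * \<alpha>D / (\<alpha>N + 2 * \<alpha>D) = (\<alpha>1 + 1) / (\<alpha>1 + 3)"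
    unfolding times_divide_eq_right[symmetric] exponent_N using \<alpha>1 by (simp add: field_simps)
  moreover have "\<alpha>C = (\<alpha>1 + \<alpha>2 + 1) / (\<alpha>1 + 3)"
    unfolding \<alpha>C times_divide_eq_right[symmetric] exponent_N by (simp add: \<alpha>N_def)
  moreover have "\<alpha>C > 0"
    using pos by (simp add: \<alpha>C)
  ultimately show ?thesis
    using eventually_unique_opt_alloc[OF pos \<open>\<alpha>D < \<alpha>N\<close>]
      opt_param_bigtheta[OF pos] opt_data_bigtheta[OF pos] loss_opt_alloc_bigtheta[OF pos]
    unfolding \<alpha>C by blast
qed

end
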